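(* For every positive constant $\varepsilon$, there is a deterministic Congested Clique algorithm which, on an input graph $G$ with arboricity $a\ge 2$, partitions the edge set of $G$ into $O(a^{1+\varepsilon})$ forests, each vertex knowing the label and orientation (towards its parent) of each incident edge, with each vertex having at most one parent in each forest, within $O(1)$ rounds.
   Context: Congested Clique model: there are $n$ processors (vertices) with distinct IDs of $O(\log n)$ bits; computation proceeds in synchronous rounds; in each round every pair of vertices may exchange a message of $O(\log n)$ bits; local computation is free. The input is a graph $G=(V,E')$ on the same vertex set; each vertex initially knows its incident edges in $G$, and $a$ is known to all vertices. The arboricity of a graph is the minimum number of forests whose union covers its edge set. *)

theory Defs
  imports Complex_Main
begin

text \<open>Vertices are their (natural-number) IDs. A simple undirected graph on vertex
set V is given by a set E of two-element subsets of V.\<close>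

definition simple_graph :: "nat set \<Rightarrow> nat set set \<Rightarrow> bool" where
  "simple_graph V E \<longleftrightarrow> finite V \<and> (\<forall>e\<in>E. \<exists>u v. e = {u, v} \<and> u \<in> V \<and> v \<in> V \<and> u \<noteq> v)"

definition is_cycle :: "nat set set \<Rightarrow> nat list \<Rightarrow> bool" where
  "is_cycle F vs \<longleftrightarrow> length vs \<ge> 3 \<and> distinct vs \<and>
     (\<forall>i < length vs. {vs ! i, vs ! ((i + 1) mod length vs)} \<in> F)"

definition forest :: "nat set set \<Rightarrow> bool" where
  "forest F \<longleftrightarrow> \<not> (\<exists>vs. is_cycle F vs)"

definition arboricity :: "nat set set \<Rightarrow> nat" where
  "arboricity E = (LEAST k. \<exists>Fs :: nat set set list.
      length Fs = k \<and> (\<forall>F\<in>set Fs. forest F) \<and> E \<subseteq> \<Union>(set Fs))"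

text \<open>Local input of a vertex: (n, a, own ID, set of all IDs, set of neighbour IDs).
Local computation is free, so w.l.o.g. the local state of a vertex is its input
together with the history of received messages. An algorithm is given by
a message function (input, history, recipient ID) \<Rightarrow> message, and an output function.
Messages are natural numbers; the value 0 is used for "no message".\<close>

type_synonym local_input = "nat \<times> nat \<times> nat \<times> nat set \<times> nat set"
type_synonym history = "(nat \<Rightarrow> nat) list"
type_synonym msg_fun = "local_input \<Rightarrow> history \<Rightarrow> nat \<Rightarrow> nat"
type_synonym out_fun = "local_input \<Rightarrow> history \<Rightarrow> nat \<Rightarrow> nat \<times> bool"

definition local_inp :: "nat set \<Rightarrow> nat set set \<Rightarrow> nat \<Rightarrow> nat \<Rightarrow> local_input" where
  "local_inp V E a v = (card V, a, v, V, {u. {v, u} \<in> E})"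

text \<open>hist msg I V r v: the messages received by v in rounds 1..r; entry j maps a
sender ID to the message it sent to v in round j+1.\<close>
primrec hist :: "msg_fun \<Rightarrow> (nat \<Rightarrow> local_input) \<Rightarrow> nat set \<Rightarrow> nat \<Rightarrow> nat \<Rightarrow> history" where
  "hist msg I V 0 = (\<lambda>v. [])"
| "hist msg I V (Suc r) = (\<lambda>v. hist msg I V r v @
      [\<lambda>u. if u \<in> V \<and> u \<noteq> v then msg (I u) (hist msg I V r u) v else 0])"

text \<open>Messages in the first R rounds have O(log n) bits: each is < n^c.\<close>
definition msgs_bounded :: "msg_fun \<Rightarrow> nat set \<Rightarrow> nat set set \<Rightarrow> nat \<Rightarrow> nat \<Rightarrow> nat \<Rightarrow> bool" where
  "msgs_bounded msg V E a R c \<longleftrightarrow>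
     (\<forall>r < R. \<forall>u\<in>V. \<forall>v\<in>V. msg (local_inp V E a u) (hist msg (local_inp V E a) V r u) v < card V ^ c)"

text \<open>Correct forest-decomposition output. lab v u is the label vertex v gives to the
edge to neighbour u; par v u means that u is v's parent (edge oriented v \<rightarrow> u).\<close>
definition forest_decomposition_output ::
  "nat set \<Rightarrow> nat set set \<Rightarrow> (nat \<Rightarrow> nat \<Rightarrow> nat) \<Rightarrow> (nat \<Rightarrow> nat \<Rightarrow> bool) \<Rightarrow> real \<Rightarrow> bool" where
  "forest_decomposition_output V E lab par bound \<longleftrightarrow>
     (\<forall>u v. {u, v} \<in> E \<longrightarrow> lab u v = lab v u \<and> (par u v \<longleftrightarrow> \<not> par v u)) \<and>
     (\<forall>i. forest {e \<in> E. \<exists>u v. e = {u, v} \<and> lab u v = i}) \<and>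
     (\<forall>v\<in>V. \<forall>i u w. {v, u} \<in> E \<and> lab v u = i \<and> par v u \<and>
                      {v, w} \<in> E \<and> lab v w = i \<and> par v w \<longrightarrow> u = w) \<and>
     real (card {lab u v | u v. {u, v} \<in> E}) \<le> bound"

end

theory Submission
  imports Defs
begin

text \<open>Choose \<open>L = \<lceil>1/\<epsilon>\<rceil>\<close> and \<open>T = \<lceil>(2a)\<^bsup>1+1/L\<^esup>\<rceil>\<close>. Every vertex set \<open>X\<close> spans at most \<open>2a|X|\<close>
  ordered pairs of adjacent vertices, so repeatedly discarding the vertices with at most \<open>T\<close>
  neighbours in the current core shrinks it by a factor \<open>2a/(T+1)\<close> per round; each round is one
  broadcast. After \<open>L\<close> rounds the core has at most \<open>n/(2a)\<close> vertices and hence at most \<open>n\<close>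
  ordered edges, which are spread one per vertex and gathered at the vertex of minimum ID; it
  computes a \<open>2a\<close>-degeneracy order of the core and sends every core vertex its rank. Orienting
  each edge towards the endpoint with the larger key (layer, rank, ID) gives out-degree at most
  \<open>T\<close>, and labelling an out-edge by the index of its head among the out-neighbours of its tail
  gives at most \<open>T = O(a\<^bsup>1+\<epsilon>\<^esup>)\<close> label classes. Each is a forest: on a cycle inside one
  class, the vertex of minimum key would have two out-edges with the same label.
  The algorithm uses \<open>L + 6\<close> rounds and messages below \<open>n\<^bsup>2k+2\<^esup>\<close>.\<close>

section \<open>Ranks and pair encodings of natural numbers\<close>

definition set_rank :: "nat set \<Rightarrow> nat \<Rightarrow> nat" where "set_rank A x = card {y\<in>A. y < x}"
definition nth_elem :: "nat set \<Rightarrow> nat \<Rightarrow> nat" where "nth_elem A i = (THE x. x \<in> A \<and> set_rank A x = i)"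

lemma set_rank_strict_mono: assumes "finite A" "x \<in> A" "x < y" shows "set_rank A x < set_rank A y"
proof -
  have "{z \<in> A. z < x} \<subset> {z \<in> A. z < y}" using assms(2,3) by auto
  then show ?thesis unfolding set_rank_def using assms(1) by (simp add: psubset_card_mono)
qed

lemma inj_on_set_rank: assumes "finite A" shows "inj_on (set_rank A) A"
proof (rule inj_onI)
  fix x y assume "x \<in> A" "y \<in> A" "set_rank A x = set_rank A y"
  then show "x = y" using set_rank_strict_mono[OF assms, of x y] set_rank_strict_mono[OF assms, of y x]
    by (cases x y rule: linorder_cases) auto
qed

lemma set_rank_less_card: assumes "finite A" "x \<in> A" shows "set_rank A x < card A"
proof -
  have "{z \<in> A. z < x} \<subset> A" using assms(2) by force
  then show ?thesis unfolding set_rank_def using assms(1) by (simp add: psubset_card_mono)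
qed

lemma set_rank_image: "finite A \<Longrightarrow> set_rank A ` A = {..<card A}"
proof -
  assume f: "finite A"
  have s: "set_rank A ` A \<subseteq> {..<card A}" using set_rank_less_card[OF f] by auto
  have "card (set_rank A ` A) = card A" using card_image[OF inj_on_set_rank[OF f]] .
  then show ?thesis using s by (simp add: card_subset_eq)
qed

lemma nth_elem_spec: assumes "finite A" "i < card A" shows "nth_elem A i \<in> A \<and> set_rank A (nth_elem A i) = i"
proof -
  obtain x where x: "x \<in> A" "set_rank A x = i" using set_rank_image[OF assms(1)] assms(2) by (metis imageE lessThan_iff)
  have "\<exists>!x. x \<in> A \<and> set_rank A x = i" using x inj_on_set_rank[OF assms(1)] by (auto simp: inj_on_def)
  then show ?thesis unfolding nth_elem_def by (rule theI')
qed

lemma nth_elem_set_rank: assumes "finite A" "x \<in> A" shows "nth_elem A (set_rank A x) = x"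
proof -
  have "nth_elem A (set_rank A x) \<in> A \<and> set_rank A (nth_elem A (set_rank A x)) = set_rank A x"
    using nth_elem_spec[OF assms(1) set_rank_less_card[OF assms]] .
  then show ?thesis using inj_on_set_rank[OF assms(1)] assms(2) by (auto simp: inj_on_def)
qed

lemma add_mult_less_cases:
  fixes a b c d B :: nat
  assumes "b < B" "d < B" "a * B + b < c * B + d"
  shows "a < c \<or> (a = c \<and> b < d)"
proof -
  have "(a * B + b) div B \<le> (c * B + d) div B" using assms(3) by (simp add: div_le_mono)
  moreover have "(a * B + b) div B = a" using assms(1) by simp
  moreover have "(c * B + d) div B = c" using assms(2) by simp
  ultimately have "a \<le> c" by simp
  then show ?thesis using assms(3) by auto
qed

lemma add_mult_eq_cancel:
  fixes a b c d B :: nat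
  assumes "b < B" "d < B" "a * B + b = c * B + d"
  shows "b = d"
proof -
  have "(a * B + b) mod B = b" using assms(1) by simp
  moreover have "(c * B + d) mod B = d" using assms(2) by simp
  ultimately show ?thesis using assms(3) by simp
qed

definition encode :: "nat \<Rightarrow> nat \<times> nat \<Rightarrow> nat" where "encode B p = fst p * B + snd p + 1"
definition decode :: "nat \<Rightarrow> nat \<Rightarrow> nat \<times> nat" where "decode B z = ((z - 1) div B, (z - 1) mod B)"

lemma decode_encode: "w < B \<Longrightarrow> decode B (encode B (u, w)) = (u, w)"
  unfolding encode_def decode_def by simp

lemma encode_le: assumes "u < B" "w < B" shows "encode B (u, w) \<le> B * B"
proof -
  have "(u + 1) * B \<le> B * B" by (rule mult_right_mono) (use assms in simp_all)
  then show ?thesis unfolding encode_def using assms(2) by (simp add: algebra_simps)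
qed

section \<open>A forest on \<open>n\<close> vertices has at most \<open>n\<close> edges\<close>

definition edges_within :: "nat set \<Rightarrow> nat set set \<Rightarrow> bool" where
  "edges_within S F \<longleftrightarrow> (\<forall>e\<in>F. \<exists>x y. e = {x, y} \<and> x \<in> S \<and> y \<in> S \<and> x \<noteq> y)"

definition simple_path :: "nat set \<Rightarrow> nat set set \<Rightarrow> nat list \<Rightarrow> bool" where
  "simple_path S F xs \<longleftrightarrow> xs \<noteq> [] \<and> distinct xs \<and> set xs \<subseteq> S \<and>
     (\<forall>i. Suc i < length xs \<longrightarrow> {xs ! i, xs ! Suc i} \<in> F)"

definition degree :: "nat set set \<Rightarrow> nat \<Rightarrow> nat" where
  "degree F x = card {e\<in>F. x \<in> e}"

lemma finite_edges_within: "edges_within S F \<Longrightarrow> finite S \<Longrightarrow> finite F"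
  by (rule finite_subset[of F "Pow S"]) (auto simp: edges_within_def)

lemma forest_subset: "forest F \<Longrightarrow> F' \<subseteq> F \<Longrightarrow> forest F'"
  unfolding forest_def is_cycle_def by blast

lemma is_cycle_two_nbrs:
  assumes c: "is_cycle C vs" and x: "x \<in> set vs"
  obtains y z where "y \<in> set vs" "z \<in> set vs" "y \<noteq> x" "z \<noteq> x" "y \<noteq> z" "{x, y} \<in> C" "{z, x} \<in> C"
proof -
  let ?n = "length vs"
  have n3: "?n \<ge> 3" and dist: "distinct vs" and ed: "\<forall>j<?n. {vs ! j, vs ! ((j + 1) mod ?n)} \<in> C"
    using c unfolding is_cycle_def by auto
  obtain m where m: "m < ?n" "vs ! m = x" using x by (metis in_set_conv_nth)
  define s where "s = (if m + 1 < ?n then m + 1 else 0)"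
  define p where "p = (if m = 0 then ?n - 1 else m - 1)"
  have sp: "s < ?n" "p < ?n" "s \<noteq> m" "p \<noteq> m" "s \<noteq> p" unfolding s_def p_def using m(1) n3 by auto
  have "(m + 1) mod ?n = s"
  proof (cases "m + 1 < ?n")
    case False
    then have "m + 1 = ?n" using m(1) by simp
    then show ?thesis unfolding s_def by simp
  qed (simp add: s_def)
  then have "{x, vs ! s} \<in> C" using ed m by force
  moreover have "(p + 1) mod ?n = m" unfolding p_def using m(1) n3 by auto
  then have "{vs ! p, x} \<in> C" using ed sp(2) m(2) by force
  moreover have "vs ! s \<noteq> x" "vs ! p \<noteq> x" "vs ! s \<noteq> vs ! p"
    using nth_eq_iff_index_eq[OF dist] m sp by metis+
  ultimately show ?thesis using that sp(1,2) by (meson nth_mem)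
qed

lemma is_cycle_drop_closing_edge:
  assumes p: "simple_path S F xs" and i: "i + 3 \<le> length xs" and e: "{last xs, xs ! i} \<in> F"
  shows "is_cycle F (drop i xs)"
proof -
  let ?vs = "drop i xs"
  have "{?vs ! j, ?vs ! ((j + 1) mod length ?vs)} \<in> F" if j: "j < length ?vs" for j
  proof (cases "j + 1 < length ?vs")
    case True
    then have "{xs ! (i + j), xs ! Suc (i + j)} \<in> F" using p unfolding simple_path_def by simp
    then show ?thesis using True by simp
  next
    case False
    then have "j + 1 = length ?vs" using j by simp
    moreover have "last xs = xs ! (i + j)"
    proof -
      have "i + j = length xs - 1" using calculation i by simp
      then show ?thesis using p unfolding simple_path_def by (simp add: last_conv_nth)
    qed
    ultimately show ?thesis using e i by simp
  qed
  then show ?thesis using p i unfolding is_cycle_def simple_path_def by simp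
qed

lemma simple_path_snoc:
  assumes "simple_path S F xs" "y \<in> S" "y \<notin> set xs" "{last xs, y} \<in> F"
  shows "simple_path S F (xs @ [y])"
  unfolding simple_path_def
proof (intro conjI allI impI)
  fix i assume i: "Suc i < length (xs @ [y])"
  show "{(xs @ [y]) ! i, (xs @ [y]) ! Suc i} \<in> F"
  proof (cases "Suc i < length xs")
    case True
    then show ?thesis using assms(1) unfolding simple_path_def by (simp add: nth_append)
  next
    case False
    then have "i = length xs - 1" using i by simp
    then show ?thesis using assms(1,4) unfolding simple_path_def by (simp add: nth_append last_conv_nth)
  qed
qed (use assms in \<open>auto simp: simple_path_def\<close>)

lemma two_incident_edges:
  assumes ed: "edges_within S F" and fin: "finite F" and deg: "degree F z \<ge> 2"
  shows "\<exists>y1 y2. y1 \<noteq> y2 \<and> {z, y1} \<in> F \<and> {z, y2} \<in> F \<and> y1 \<in> S \<and> y2 \<in> S \<and> y1 \<noteq> z \<and> y2 \<noteq> z"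
proof -
  obtain e1 e2 where e: "e1 \<in> F" "e2 \<in> F" "z \<in> e1" "z \<in> e2" "e1 \<noteq> e2"
    using deg fin card_le_Suc0_iff_eq[of "{e\<in>F. z \<in> e}"] unfolding degree_def by force
  have other_end: "\<exists>y. e = {z, y} \<and> y \<in> S \<and> y \<noteq> z" if "e \<in> F" "z \<in> e" for e
    using ed that unfolding edges_within_def by (auto simp: insert_commute)
  obtain y1 y2 where "e1 = {z, y1}" "y1 \<in> S" "y1 \<noteq> z" "e2 = {z, y2}" "y2 \<in> S" "y2 \<noteq> z"
    using other_end e by metis
  then show ?thesis using e by blast
qed

text \<open>In a forest of minimum degree 2 every simple path extends: of the two neighbours of its
  last vertex one is not the predecessor, and it cannot lie on the path without closing a cycle.\<close>

lemma forest_min_degree_2_simple_path: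
  assumes fo: "forest F" and ed: "edges_within S F" and fS: "finite S" and ne: "S \<noteq> {}"
    and deg2: "\<forall>x\<in>S. degree F x \<ge> 2"
  shows "\<exists>xs. simple_path S F xs \<and> length xs = Suc n"
proof (induction n)
  case 0
  obtain x where "x \<in> S" using ne by blast
  then have "simple_path S F [x]" unfolding simple_path_def by simp
  then show ?case by force
next
  case (Suc n)
  then obtain xs where p: "simple_path S F xs" and l: "length xs = Suc n" by blast
  let ?z = "last xs"
  have "?z \<in> S" using p unfolding simple_path_def by auto
  then obtain y1 y2 where y: "y1 \<noteq> y2" "{?z, y1} \<in> F" "{?z, y2} \<in> F" "y1 \<in> S" "y2 \<in> S" "y1 \<noteq> ?z" "y2 \<noteq> ?z"
    using two_incident_edges[OF ed finite_edges_within[OF ed fS]] deg2 by blast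
  obtain y where yy: "{?z, y} \<in> F" "y \<in> S" "y \<noteq> ?z" and not_pred: "y \<noteq> xs ! (n - 1)"
    using y by (cases "y1 = xs ! (n - 1)") blast+
  show ?case
  proof (cases "y \<in> set xs")
    case False
    then show ?thesis using simple_path_snoc[OF p yy(2) False yy(1)] l by force
  next
    case True
    then obtain i where i: "i < length xs" "xs ! i = y" by (metis in_set_conv_nth)
    have "i \<noteq> n" using yy(3) i l p unfolding simple_path_def by (auto simp: last_conv_nth)
    moreover have "i \<noteq> n - 1" using not_pred i by blast
    ultimately have "i + 3 \<le> length xs" using i l by auto
    then have "is_cycle F (drop i xs)" using is_cycle_drop_closing_edge[OF p] yy i by simp
    then show ?thesis using fo unfolding forest_def by blast
  qed
qed

lemma forest_low_degree_vertex:
  assumes fo: "forest F" and ed: "edges_within S F" and fS: "finite S" and ne: "S \<noteq> {}"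
  shows "\<exists>x\<in>S. degree F x \<le> 1"
proof (rule ccontr)
  assume "\<not> ?thesis"
  then have "\<forall>x\<in>S. degree F x \<ge> 2" by auto
  then obtain xs where p: "simple_path S F xs" and "length xs = Suc (card S)"
    using forest_min_degree_2_simple_path[OF fo ed fS ne] by blast
  moreover have "length xs \<le> card S"
  proof -
    have "length xs = card (set xs)" using p distinct_card unfolding simple_path_def by metis
    also have "\<dots> \<le> card S" using p fS card_mono unfolding simple_path_def by metis
    finally show ?thesis .
  qed
  ultimately show False by simp
qed

lemma card_forest_le:
  assumes "forest F" "edges_within S F" "finite S"
  shows "card F \<le> card S"
  using assms
proof (induction "card S" arbitrary: S F)
  case 0
  then have "S = {}" by simp
  then show ?case using 0 unfolding edges_within_def by auto
next
  case (Suc m)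
  then have "S \<noteq> {}" by auto
  then obtain x where x: "x \<in> S" "degree F x \<le> 1"
    using forest_low_degree_vertex[OF Suc(3-5)] by blast
  let ?F' = "{e\<in>F. x \<notin> e}"
  have "forest ?F'" by (rule forest_subset[OF Suc(3)]) auto
  moreover have "edges_within (S - {x}) ?F'" using Suc(4) unfolding edges_within_def by blast
  ultimately have "card ?F' \<le> card (S - {x})" using Suc(1)[of "S - {x}" ?F'] Suc(2,5) x by simp
  moreover have "card F \<le> card ?F' + degree F x"
  proof -
    have "F = ?F' \<union> {e\<in>F. x \<in> e}" by auto
    then show ?thesis unfolding degree_def by (metis card_Un_le)
  qed
  ultimately show ?case using x Suc(2,5) by simp
qed

section \<open>Graphs of bounded arboricity\<close>

definition nbrs :: "nat set set \<Rightarrow> nat \<Rightarrow> nat set" where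
  "nbrs E v = {u. {v, u} \<in> E}"

definition arcs :: "nat set set \<Rightarrow> nat set \<Rightarrow> (nat \<times> nat) set" where
  "arcs E X = Sigma X (\<lambda>u. nbrs E u \<inter> X)"

definition covered_by_forests :: "nat set set \<Rightarrow> nat \<Rightarrow> bool" where
  "covered_by_forests E a \<longleftrightarrow> (\<exists>Fs. length Fs = a \<and> (\<forall>F\<in>set Fs. forest F) \<and> E \<subseteq> \<Union>(set Fs))"

lemma simple_graph_edgeD:
  "simple_graph V E \<Longrightarrow> e \<in> E \<Longrightarrow> \<exists>x y. e = {x, y} \<and> x \<in> V \<and> y \<in> V \<and> x \<noteq> y"
  unfolding simple_graph_def by blast

lemma simple_graph_finite: "simple_graph V E \<Longrightarrow> X \<subseteq> V \<Longrightarrow> finite X"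
  unfolding simple_graph_def using finite_subset by blast

lemma simple_graph_finite_edges: "simple_graph V E \<Longrightarrow> finite E"
  by (rule finite_subset[of E "Pow V"]) (auto simp: simple_graph_def)

lemma nbrs_subset: "simple_graph V E \<Longrightarrow> nbrs E u \<subseteq> V"
  unfolding simple_graph_def nbrs_def by (fastforce simp: doubleton_eq_iff)

lemma not_in_nbrs_self: "simple_graph V E \<Longrightarrow> u \<notin> nbrs E u"
  unfolding simple_graph_def nbrs_def by (fastforce simp: doubleton_eq_iff)

lemma nbrs_sym: "w \<in> nbrs E u \<longleftrightarrow> u \<in> nbrs E w"
  unfolding nbrs_def by (simp add: insert_commute)

lemma finite_nbrs: "simple_graph V E \<Longrightarrow> finite (nbrs E u)"
  using nbrs_subset simple_graph_finite by blast

lemma forest_singleton: "forest {e}"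
  unfolding forest_def
proof
  assume "\<exists>vs. is_cycle {e} vs"
  then obtain vs where len: "length vs \<ge> 3" and dist: "distinct vs"
    and edges: "\<forall>i<length vs. {vs ! i, vs ! ((i + 1) mod length vs)} \<in> {e}"
    unfolding is_cycle_def by blast
  have m0: "(0 + 1) mod length vs = 1" and m1: "(1 + 1) mod length vs = 2" using len by simp_all
  have l012: "0 < length vs" "1 < length vs" "2 < length vs" using len by linarith+
  have "{vs ! 0, vs ! ((0 + 1) mod length vs)} \<in> {e}" using edges l012 by blast
  then have e0: "{vs ! 0, vs ! 1} = e" using m0 by simp
  have "{vs ! 1, vs ! ((1 + 1) mod length vs)} \<in> {e}" using edges l012 by blast
  then have e1: "{vs ! 1, vs ! 2} = e" using m1 by simp
  have "vs ! 0 \<noteq> vs ! 1" "vs ! 0 \<noteq> vs ! 2" "vs ! 1 \<noteq> vs ! 2"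
    using dist l012 by (simp_all add: nth_eq_iff_index_eq)
  moreover have "{vs ! 0, vs ! 1} = {vs ! 1, vs ! 2}" using e0 e1 by simp
  ultimately show False by (simp add: doubleton_eq_iff)
qed

lemma covered_by_forests_arboricity:
  assumes "simple_graph V E"
  shows "covered_by_forests E (arboricity E)"
proof -
  obtain xs where xs: "set xs = E" using finite_list[OF simple_graph_finite_edges[OF assms]] by blast
  have "covered_by_forests E (length xs)"
    unfolding covered_by_forests_def
    by (rule exI[of _ "map (\<lambda>e. {e}) xs"]) (auto simp: xs[symmetric] forest_singleton)
  then show ?thesis unfolding arboricity_def covered_by_forests_def by (rule LeastI)
qed

lemma card_forest_arcs_le:
  assumes fo: "forest F" and s: "simple_graph V E" and X: "X \<subseteq> V"
  shows "card {(u, w) \<in> arcs E X. {u, w} \<in> F} \<le> 2 * card X"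
proof -
  let ?A = "{(u, w) \<in> arcs E X. {u, w} \<in> F}"
  let ?up = "{(u, w) \<in> arcs E X. {u, w} \<in> F \<and> u < w}"
  let ?down = "{(u, w) \<in> arcs E X. {u, w} \<in> F \<and> w < u}"
  let ?G = "{e \<in> F. e \<in> E \<and> e \<subseteq> X}"
  have fX: "finite X" using simple_graph_finite[OF s X] .
  have inj: "inj_on (\<lambda>(u, w). {u, w}) ?up"
  proof (rule inj_onI)
    fix p q assume "p \<in> ?up" "q \<in> ?up" "(\<lambda>(u, w). {u, w}) p = (\<lambda>(u, w). {u, w}) q"
    then show "p = q" by (cases p, cases q) (auto simp: doubleton_eq_iff)
  qed
  have img: "(\<lambda>(u, w). {u, w}) ` ?up \<subseteq> ?G" by (auto simp: arcs_def nbrs_def)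
  have "finite ?G" by (rule finite_subset[of _ "Pow X"]) (use fX in auto)
  then have "card ?up \<le> card ?G" using card_inj_on_le[OF inj img] by blast
  also have "card ?G \<le> card X"
  proof (rule card_forest_le[OF _ _ fX])
    show "forest ?G" by (rule forest_subset[OF fo]) auto
    show "edges_within X ?G"
      unfolding edges_within_def
    proof
      fix e assume e: "e \<in> ?G"
      then obtain x y where "e = {x, y}" "x \<noteq> y" using simple_graph_edgeD[OF s] by blast
      then show "\<exists>x y. e = {x, y} \<and> x \<in> X \<and> y \<in> X \<and> x \<noteq> y" using e by blast
    qed
  qed
  finally have up: "card ?up \<le> card X" .
  have "?down = (\<lambda>(u, w). (w, u)) ` ?up" by (force simp: arcs_def nbrs_def insert_commute)
  moreover have "inj_on (\<lambda>(u, w). (w, u)) ?up" by (rule inj_onI) auto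
  ultimately have down: "card ?down = card ?up" by (simp add: card_image)
  have "?A = ?up \<union> ?down" using not_in_nbrs_self[OF s] by (auto simp: arcs_def) (metis linorder_neqE_nat)
  then have "card ?A \<le> card ?up + card ?down" using card_Un_le[of ?up ?down] by (simp only:)
  then show ?thesis using up down by simp
qed

lemma card_arcs_le:
  assumes s: "simple_graph V E" and X: "X \<subseteq> V" and cov: "covered_by_forests E a"
  shows "card (arcs E X) \<le> 2 * a * card X"
proof -
  obtain Fs where Fs: "length Fs = a" "\<forall>F\<in>set Fs. forest F" "E \<subseteq> \<Union>(set Fs)"
    using cov unfolding covered_by_forests_def by blast
  define A where "A F = {(u, w) \<in> arcs E X. {u, w} \<in> F}" for F
  have "arcs E X \<subseteq> (\<Union>F\<in>set Fs. A F)"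
  proof
    fix p assume p: "p \<in> arcs E X"
    then obtain u w where "p = (u, w)" "{u, w} \<in> E" by (auto simp: arcs_def nbrs_def)
    then show "p \<in> (\<Union>F\<in>set Fs. A F)" using p Fs(3) unfolding A_def by blast
  qed
  moreover have "finite (\<Union>F\<in>set Fs. A F)"
  proof (rule finite_subset)
    show "(\<Union>F\<in>set Fs. A F) \<subseteq> X \<times> X" unfolding A_def arcs_def by auto
    show "finite (X \<times> X)" using simple_graph_finite[OF s X] by simp
  qed
  ultimately have "card (arcs E X) \<le> card (\<Union>F\<in>set Fs. A F)" by (rule card_mono[rotated])
  also have "\<dots> \<le> (\<Sum>F\<in>set Fs. card (A F))" by (rule card_UN_le) simp
  also have "\<dots> \<le> (\<Sum>F\<in>set Fs. 2 * card X)"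
    by (rule sum_mono) (use Fs(2) card_forest_arcs_le[OF _ s X] in \<open>auto simp: A_def\<close>)
  also have "\<dots> \<le> a * (2 * card X)" using Fs(1) card_length[of Fs] by (simp add: mult_le_mono1)
  finally show ?thesis by simp
qed

lemma card_arcs_eq_sum:
  "simple_graph V E \<Longrightarrow> X \<subseteq> V \<Longrightarrow> card (arcs E X) = (\<Sum>u\<in>X. card (nbrs E u \<inter> X))"
  unfolding arcs_def by (rule card_SigmaI) (simp_all add: simple_graph_finite finite_nbrs)

lemma exists_low_degree_vertex:
  assumes s: "simple_graph V E" and X: "X \<subseteq> V" "X \<noteq> {}" and cov: "covered_by_forests E a"
  shows "\<exists>u\<in>X. card (nbrs E u \<inter> X) \<le> 2 * a"
proof (rule ccontr)
  assume "\<not> ?thesis"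
  then have "(\<Sum>u\<in>X. 2 * a) < (\<Sum>u\<in>X. card (nbrs E u \<inter> X))"
    using simple_graph_finite[OF s X(1)] X(2) by (intro sum_strict_mono) auto
  then show False using card_arcs_le[OF s X(1) cov] card_arcs_eq_sum[OF s X(1)] by (simp add: mult.commute)
qed

lemma card_high_degree_le:
  assumes s: "simple_graph V E" and X: "X \<subseteq> V" and cov: "covered_by_forests E a"
  shows "card {u\<in>X. T < card (nbrs E u \<inter> X)} * (T + 1) \<le> 2 * a * card X"
proof -
  let ?S = "{u\<in>X. T < card (nbrs E u \<inter> X)}"
  have "card ?S * (T + 1) = (\<Sum>u\<in>?S. T + 1)" by simp
  also have "\<dots> \<le> (\<Sum>u\<in>?S. card (nbrs E u \<inter> X))" by (rule sum_mono) auto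
  also have "\<dots> \<le> (\<Sum>u\<in>X. card (nbrs E u \<inter> X))"
    by (rule sum_mono2[OF simple_graph_finite[OF s X]]) auto
  also have "\<dots> = card (arcs E X)" using card_arcs_eq_sum[OF s X] by simp
  also have "\<dots> \<le> 2 * a * card X" using card_arcs_le[OF s X cov] .
  finally show ?thesis .
qed

definition degeneracy_rank :: "nat \<Rightarrow> nat set \<Rightarrow> (nat \<times> nat) set \<Rightarrow> (nat \<Rightarrow> nat) \<Rightarrow> bool" where
  "degeneracy_rank a S D \<rho> \<longleftrightarrow> inj_on \<rho> S \<and> (\<forall>u\<in>S. \<rho> u < card S) \<and>
     (\<forall>u\<in>S. card {w\<in>S. (u, w) \<in> D \<and> \<rho> u < \<rho> w} \<le> 2 * a)"

definition some_degeneracy_rank :: "nat \<Rightarrow> nat set \<Rightarrow> (nat \<times> nat) set \<Rightarrow> nat \<Rightarrow> nat" where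
  "some_degeneracy_rank a S D = (SOME \<rho>. degeneracy_rank a S D \<rho>)"

lemma degeneracy_rank_arcs_iff:
  "degeneracy_rank a X (arcs E X) \<rho> \<longleftrightarrow> inj_on \<rho> X \<and> (\<forall>u\<in>X. \<rho> u < card X) \<and>
     (\<forall>u\<in>X. card {w\<in>nbrs E u \<inter> X. \<rho> u < \<rho> w} \<le> 2 * a)"
proof -
  have "{w\<in>X. (u, w) \<in> arcs E X \<and> \<rho> u < \<rho> w} = {w\<in>nbrs E u \<inter> X. \<rho> u < \<rho> w}" if "u \<in> X" for u
    using that unfolding arcs_def by auto
  then show ?thesis unfolding degeneracy_rank_def by simp
qed

text \<open>Repeatedly remove a vertex of degree at most \<open>2a\<close> and give it the lowest rank.\<close>

lemma degeneracy_rank_exists: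
  assumes s: "simple_graph V E" and cov: "covered_by_forests E a"
  shows "X \<subseteq> V \<Longrightarrow> \<exists>\<rho>. degeneracy_rank a X (arcs E X) \<rho>"
proof (induction "card X" arbitrary: X)
  case 0
  then have "X = {}" using simple_graph_finite[OF s] by simp
  then show ?case by (simp add: degeneracy_rank_def)
next
  case (Suc m)
  have fX: "finite X" using simple_graph_finite[OF s Suc(3)] .
  have "X \<noteq> {}" using Suc(2) by auto
  then obtain x where x: "x \<in> X" "card (nbrs E x \<inter> X) \<le> 2 * a"
    using exists_low_degree_vertex[OF s Suc(3) _ cov] by blast
  have m: "m = card (X - {x})" using Suc(2) x(1) fX by simp
  have "X - {x} \<subseteq> V" using Suc(3) by blast
  then obtain \<rho>' where "degeneracy_rank a (X - {x}) (arcs E (X - {x})) \<rho>'"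
    using Suc(1)[OF m] by blast
  then have r: "inj_on \<rho>' (X - {x})" "\<forall>u\<in>X - {x}. \<rho>' u < m"
      "\<forall>u\<in>X - {x}. card {w\<in>nbrs E u \<inter> (X - {x}). \<rho>' u < \<rho>' w} \<le> 2 * a"
    unfolding degeneracy_rank_arcs_iff m by blast+
  define \<rho> where "\<rho> u = (if u = x then 0 else Suc (\<rho>' u))" for u
  have "inj_on \<rho> X"
    using r(1) unfolding \<rho>_def inj_on_def by (auto split: if_splits)
  moreover have "\<forall>u\<in>X. \<rho> u < card X"
    using r(2) Suc(2) unfolding \<rho>_def by (metis Diff_iff Suc_mono empty_iff insert_iff zero_less_Suc)
  moreover have "card {w\<in>nbrs E u \<inter> X. \<rho> u < \<rho> w} \<le> 2 * a" if u: "u \<in> X" for u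
  proof (cases "u = x")
    case True
    have "card {w\<in>nbrs E u \<inter> X. \<rho> u < \<rho> w} \<le> card (nbrs E x \<inter> X)"
      by (rule card_mono) (use fX True in auto)
    then show ?thesis using x(2) by simp
  next
    case False
    have "{w\<in>nbrs E u \<inter> X. \<rho> u < \<rho> w} = {w\<in>nbrs E u \<inter> (X - {x}). \<rho>' u < \<rho>' w}"
      unfolding \<rho>_def using False by auto
    then show ?thesis using r(3) u False by simp
  qed
  ultimately show ?case unfolding degeneracy_rank_arcs_iff by blast
qed

lemma some_degeneracy_rank:
  "simple_graph V E \<Longrightarrow> X \<subseteq> V \<Longrightarrow> covered_by_forests E a \<Longrightarrow>
     degeneracy_rank a X (arcs E X) (some_degeneracy_rank a X (arcs E X))"
  unfolding some_degeneracy_rank_def using degeneracy_rank_exists by (rule someI_ex)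

lemma card_ge_2_if_arboricity_pos:
  assumes s: "simple_graph V E" and a: "arboricity E \<ge> 1"
  shows "card V \<ge> 2"
proof -
  have "E \<noteq> {}"
  proof
    assume "E = {}"
    then have "arboricity E = 0" unfolding arboricity_def by (intro Least_eq_0) simp
    then show False using a by simp
  qed
  then obtain x y where "x \<in> V" "y \<in> V" "x \<noteq> y" using simple_graph_edgeD[OF s] by blast
  then have "card {x, y} \<le> card V" using simple_graph_finite[OF s] by (intro card_mono) auto
  then show ?thesis using \<open>x \<noteq> y\<close> by simp
qed

section \<open>Peeling threshold\<close>

definition out_bound :: "nat \<Rightarrow> nat \<Rightarrow> nat" where
  "out_bound L a = nat \<lceil>(2 * real a) powr (1 + 1 / real L)\<rceil>"

lemma out_bound_ge:
  shows "(2 * real a) powr (1 + 1 / real L) \<le> real (out_bound L a)"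
  unfolding out_bound_def by linarith

lemma out_bound_ge_2a:
  assumes "a \<ge> 1"
  shows "2 * a \<le> out_bound L a"
proof -
  have "1 \<le> 2 * real a" using assms by simp
  then have "(2 * real a) powr 1 \<le> (2 * real a) powr (1 + 1 / real L)" by (intro powr_mono) auto
  then have "2 * real a \<le> real (out_bound L a)" using out_bound_ge[of a L] assms by simp
  then show ?thesis by linarith
qed

lemma out_bound_pow:
  assumes "a \<ge> 1" "L \<ge> 1"
  shows "(2 * a) ^ (L + 1) \<le> out_bound L a ^ L"
proof -
  let ?x = "2 * real a"
  have x0: "?x > 0" using assms by simp
  have "real ((2 * a) ^ (L + 1)) = ?x ^ (L + 1)" by simp
  also have "\<dots> = ?x powr real (L + 1)" by (simp only: powr_realpow[OF x0])
  also have "\<dots> = ?x powr (real L * (1 + 1 / real L))"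
  proof -
    have eq: "real L * (1 + 1 / real L) = real (L + 1)" using assms(2) by (simp add: field_simps)
    show ?thesis by (simp only: eq)
  qed
  also have "\<dots> = (?x powr (1 + 1 / real L)) ^ L" using powr_power[of ?x] x0 by simp
  also have "\<dots> \<le> real (out_bound L a) ^ L"
    by (rule power_mono[OF out_bound_ge]) simp
  also have "\<dots> = real (out_bound L a ^ L)" by simp
  finally show ?thesis by linarith
qed

lemma out_bound_le:
  assumes e: "\<epsilon> > 0" and a: "a \<ge> 1" and L1: "1 / \<epsilon> \<le> real L"
  shows "real (out_bound L a) \<le> (2 powr (1 + \<epsilon>) + 1) * real a powr (1 + \<epsilon>)"
proof -
  have Lp: "real L > 0" using L1 e by (smt (verit) divide_pos_pos)
  have "1 / real L \<le> \<epsilon>" using L1 e Lp by (simp add: field_simps)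
  then have "(2 * real a) powr (1 + 1 / real L) \<le> (2 * real a) powr (1 + \<epsilon>)"
    using a by (intro powr_mono) auto
  also have "\<dots> = 2 powr (1 + \<epsilon>) * real a powr (1 + \<epsilon>)" by (simp add: powr_mult)
  finally have h: "(2 * real a) powr (1 + 1 / real L) \<le> 2 powr (1 + \<epsilon>) * real a powr (1 + \<epsilon>)" .
  have "real (out_bound L a) \<le> (2 * real a) powr (1 + 1 / real L) + 1"
  proof -
    let ?y = "(2 * real a) powr (1 + 1 / real L)"
    have y0: "0 \<le> ?y" by simp
    have "0 \<le> \<lceil>?y\<rceil>" using ceiling_mono[OF y0] by simp
    then have "real (nat \<lceil>?y\<rceil>) = real_of_int \<lceil>?y\<rceil>" by simp
    moreover have "real_of_int \<lceil>?y\<rceil> < ?y + 1" by linarith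
    ultimately show ?thesis unfolding out_bound_def by simp
  qed
  moreover have "1 \<le> real a powr (1 + \<epsilon>)" using a e by (intro ge_one_powr_ge_zero) auto
  ultimately show ?thesis using h by (simp add: algebra_simps)
qed

fun core :: "nat \<Rightarrow> nat \<Rightarrow> nat set \<Rightarrow> nat set set \<Rightarrow> nat \<Rightarrow> nat set" where
  "core L a V E 0 = V"
| "core L a V E (Suc j) = {u \<in> core L a V E j. out_bound L a < card (nbrs E u \<inter> core L a V E j)}"

section \<open>The algorithm\<close>

lemma length_hist: "length (hist msg I V r v) = r"
  by (induction r arbitrary: v) auto

lemma nth_hist: "j < r \<Longrightarrow> hist msg I V r v ! j = (\<lambda>u. if u \<in> V \<and> u \<noteq> v then msg (I u) (hist msg I V j u) v else 0)"
proof (induction r arbitrary: v)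
  case 0 then show ?case by simp
next
  case (Suc r)
  then show ?case
    by (cases "j = r") (auto simp: nth_append length_hist)
qed

declare hist.simps(2)[simp del]

definition inp_n :: "local_input \<Rightarrow> nat" where "inp_n I = fst I"
definition inp_arb :: "local_input \<Rightarrow> nat" where "inp_arb I = fst (snd I)"
definition inp_id :: "local_input \<Rightarrow> nat" where "inp_id I = fst (snd (snd I))"
definition inp_ids :: "local_input \<Rightarrow> nat set" where "inp_ids I = fst (snd (snd (snd I)))"
definition inp_nbrs :: "local_input \<Rightarrow> nat set" where "inp_nbrs I = snd (snd (snd (snd I)))"

lemma local_inp_simps[simp]:
  "inp_n (local_inp V E a v) = card V" "inp_arb (local_inp V E a v) = a" "inp_id (local_inp V E a v) = v"
  "inp_ids (local_inp V E a v) = V" "inp_nbrs (local_inp V E a v) = nbrs E v"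
  by (simp_all add: inp_n_def inp_arb_def inp_id_def inp_ids_def inp_nbrs_def local_inp_def nbrs_def)

text \<open>A function with suffix \<open>_loc\<close> is what a vertex computes from its local input \<open>I\<close> and its
  history \<open>h\<close>, whose entry \<open>j\<close> holds the messages received in round \<open>j + 1\<close>.\<close>

fun core_loc :: "nat \<Rightarrow> local_input \<Rightarrow> history \<Rightarrow> nat \<Rightarrow> nat set" where
  "core_loc L I h 0 = inp_ids I"
| "core_loc L I h (Suc j) = {u \<in> inp_ids I. if u = inp_id I then (u \<in> core_loc L I h j \<and> out_bound L (inp_arb I) < card (inp_nbrs I \<inter> core_loc L I h j))
                                  else (h ! j) u = 1}"

text \<open>The arcs \<open>(v, w)\<close> of the final core are numbered by \<open>v\<close> first: those of \<open>v\<close> form the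
  block of positions \<open>offset v, \<dots>, offset v + deg v - 1\<close>, and the vertex whose ID has rank \<open>i\<close>
  among all IDs becomes responsible for the arc at position \<open>i\<close>.\<close>

definition own_deg_loc :: "nat \<Rightarrow> local_input \<Rightarrow> history \<Rightarrow> nat" where
  "own_deg_loc L I h = (if inp_id I \<in> core_loc L I h L then card (inp_nbrs I \<inter> core_loc L I h L) else 0)"

definition deg_loc :: "nat \<Rightarrow> local_input \<Rightarrow> history \<Rightarrow> nat \<Rightarrow> nat" where
  "deg_loc L I h u = (if u = inp_id I then own_deg_loc L I h else (h ! L) u)"

definition offset_loc :: "nat \<Rightarrow> local_input \<Rightarrow> history \<Rightarrow> nat \<Rightarrow> nat" where
  "offset_loc L I h u = (\<Sum>y\<in>{y\<in>inp_ids I. y < u}. deg_loc L I h y)"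

definition in_block_loc :: "nat \<Rightarrow> local_input \<Rightarrow> history \<Rightarrow> nat \<Rightarrow> bool" where
  "in_block_loc L I h x \<longleftrightarrow> offset_loc L I h (inp_id I) \<le> set_rank (inp_ids I) x \<and> set_rank (inp_ids I) x < offset_loc L I h (inp_id I) + own_deg_loc L I h"

definition block_nbr_loc :: "nat \<Rightarrow> local_input \<Rightarrow> history \<Rightarrow> nat \<Rightarrow> nat" where
  "block_nbr_loc L I h x = nth_elem (inp_nbrs I \<inter> core_loc L I h L) (set_rank (inp_ids I) x - offset_loc L I h (inp_id I))"

definition arc_item_loc :: "nat \<Rightarrow> local_input \<Rightarrow> history \<Rightarrow> (nat \<times> nat) option" where
  "arc_item_loc L I h = (if in_block_loc L I h (inp_id I) then Some (inp_id I, block_nbr_loc L I h (inp_id I))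
     else if (\<exists>u. u \<in> inp_ids I \<and> u \<noteq> inp_id I \<and> (h ! Suc L) u \<noteq> 0)
     then Some ((SOME u. u \<in> inp_ids I \<and> u \<noteq> inp_id I \<and> (h ! Suc L) u \<noteq> 0),
                (h ! Suc L) (SOME u. u \<in> inp_ids I \<and> u \<noteq> inp_id I \<and> (h ! Suc L) u \<noteq> 0) - 1)
     else None)"

definition leader :: "local_input \<Rightarrow> nat" where "leader I = Min (inp_ids I)"

definition gathered_arcs :: "nat \<Rightarrow> nat \<Rightarrow> local_input \<Rightarrow> history \<Rightarrow> (nat \<times> nat) set" where
  "gathered_arcs k L I h = {q. \<exists>x\<in>inp_ids I. (x \<noteq> inp_id I \<and> (h ! Suc (Suc L)) x \<noteq> 0 \<and> q = decode (inp_n I ^ k) ((h ! Suc (Suc L)) x))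
                         \<or> (x = inp_id I \<and> arc_item_loc L I h = Some q)}"

definition leader_rank :: "nat \<Rightarrow> nat \<Rightarrow> local_input \<Rightarrow> history \<Rightarrow> nat \<Rightarrow> nat" where
  "leader_rank k L I h = some_degeneracy_rank (inp_arb I) (core_loc L I h L) (gathered_arcs k L I h)"

definition own_rank_loc :: "nat \<Rightarrow> nat \<Rightarrow> local_input \<Rightarrow> history \<Rightarrow> nat" where
  "own_rank_loc k L I h = (if inp_id I = leader I then (if inp_id I \<in> core_loc L I h L then leader_rank k L I h (inp_id I) else 0)
                    else (h ! (L + 3)) (leader I))"

definition rank_loc :: "nat \<Rightarrow> nat \<Rightarrow> local_input \<Rightarrow> history \<Rightarrow> nat \<Rightarrow> nat" where
  "rank_loc k L I h u = (if u = inp_id I then own_rank_loc k L I h else (h ! (L + 4)) u)"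

definition layer_loc :: "nat \<Rightarrow> local_input \<Rightarrow> history \<Rightarrow> nat \<Rightarrow> nat" where
  "layer_loc L I h u = card {j \<in> {1..L}. u \<in> core_loc L I h j}"

text \<open>The key encodes (layer, rank, ID) lexicographically, since IDs and ranks are below \<open>n\<^sup>k\<close>.\<close>

definition key_loc :: "nat \<Rightarrow> nat \<Rightarrow> local_input \<Rightarrow> history \<Rightarrow> nat \<Rightarrow> nat" where
  "key_loc k L I h u = (layer_loc L I h u * inp_n I ^ k + rank_loc k L I h u) * inp_n I ^ k + u"

definition out_nbrs_loc :: "nat \<Rightarrow> nat \<Rightarrow> local_input \<Rightarrow> history \<Rightarrow> nat set" where
  "out_nbrs_loc k L I h = {w \<in> inp_nbrs I. key_loc k L I h (inp_id I) < key_loc k L I h w}"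

text \<open>Round \<open>r\<close> is sent by a vertex whose history has length \<open>r - 1\<close>. Rounds \<open>1, \<dots>, L\<close>: membership
  in the next core. Round \<open>L + 1\<close>: degree in the final core. Round \<open>L + 2\<close>: each core vertex
  hands every arc of its block to the vertex responsible for it. Round \<open>L + 3\<close>: these forward
  their arc to the leader. Round \<open>L + 4\<close>: the leader sends every core vertex its degeneracy
  rank. Round \<open>L + 5\<close>: every vertex broadcasts its rank. Round \<open>L + 6\<close>: every vertex tells each
  out-neighbour the label of their edge. Values are shifted by one wherever the receiver has
  to tell \<open>0\<close> from no message.\<close>

definition msg_raw :: "nat \<Rightarrow> nat \<Rightarrow> msg_fun" where
  "msg_raw k L I h x =
    (if length h < L then (if inp_id I \<in> core_loc L I h (Suc (length h)) then 1 else 0)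
     else if length h = L then own_deg_loc L I h
     else if length h = L + 1 then (if in_block_loc L I h x then block_nbr_loc L I h x + 1 else 0)
     else if length h = L + 2 then (if x = leader I then (case arc_item_loc L I h of Some p \<Rightarrow> encode (inp_n I ^ k) p | None \<Rightarrow> 0) else 0)
     else if length h = L + 3 then (if inp_id I = leader I \<and> x \<in> core_loc L I h L then leader_rank k L I h x else 0)
     else if length h = L + 4 then own_rank_loc k L I h
     else if length h = L + 5 then (if x \<in> out_nbrs_loc k L I h then set_rank (out_nbrs_loc k L I h) x + 1 else 0)
     else 0)"

text \<open>The truncation makes the bandwidth bound hold by construction; in the correctness proof it
  never changes a message.\<close>

definition msg_alg :: "nat \<Rightarrow> nat \<Rightarrow> msg_fun" where
  "msg_alg k L I h x = (if msg_raw k L I h x < inp_n I ^ (2 * k + 2) then msg_raw k L I h x else 0)"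

definition out_alg :: "nat \<Rightarrow> nat \<Rightarrow> out_fun" where
  "out_alg k L I h u = (if key_loc k L I h (inp_id I) < key_loc k L I h u
                     then (set_rank (out_nbrs_loc k L I h) u + 1, True)
                     else ((h ! (L + 5)) u, False))"

section \<open>Correctness\<close>

locale forest_alg =
  fixes V :: "nat set" and E :: "nat set set" and a L k :: nat
  assumes sg: "simple_graph V E" and ids: "V \<subseteq> {..<card V ^ k}" and cov: "covered_by_forests E a"
    and a1: "a \<ge> 1" and card_V_ge_2: "card V \<ge> 2" and L1: "L \<ge> 1"
begin

abbreviation "S \<equiv> core L a V E"
abbreviation "T \<equiv> out_bound L a"
abbreviation "B \<equiv> card V ^ k"

lemma finite_V: "finite V" using sg unfolding simple_graph_def by simp

lemma k_ge_1: "k \<ge> 1"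
proof (rule ccontr)
  assume "\<not> k \<ge> 1"
  then have "k = 0" by simp
  then have "V \<subseteq> {0}" using ids by auto
  then have "card V \<le> card {0::nat}" by (rule card_mono[rotated]) simp
  then have "card V \<le> 1" by simp
  then show False using card_V_ge_2 by simp
qed

lemma id_less_B: "u \<in> V \<Longrightarrow> u < B" using ids by auto

lemma card_V_le_B: "card V \<le> B"
proof -
  have "card V ^ 1 \<le> card V ^ k" using k_ge_1 card_V_ge_2 by (intro power_increasing) auto
  then show ?thesis by simp
qed

lemma B_le_BB: "B \<le> B * B"
  using card_V_le_B card_V_ge_2 by simp

lemma card_V_le_BB: "card V \<le> B * B"
  using card_V_le_B B_le_BB by linarith

lemma B_sq_less: "B * B < card V ^ (2 * k + 2)"
proof -
  have "B * B = card V ^ (2 * k)" by (simp add: power_add[symmetric] mult_2)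
  also have "\<dots> < card V ^ (2 * k + 2)" using card_V_ge_2 by (intro power_strict_increasing) auto
  finally show ?thesis .
qed

lemma core_subset: "S j \<subseteq> V"
  by (induction j) auto

lemma core_antimono: "i \<le> j \<Longrightarrow> S j \<subseteq> S i"
  by (rule lift_Suc_antimono_le[of S]) auto

definition layer :: "nat \<Rightarrow> nat" where "layer u = card {j \<in> {1..L}. u \<in> S j}"

lemma layer_le: "layer u \<le> L"
proof -
  have "card {j \<in> {1..L}. u \<in> S j} \<le> card {1..L}" by (rule card_mono) auto
  then show ?thesis unfolding layer_def by simp
qed

lemma in_core_iff_layer: assumes u: "u \<in> V" and j: "j \<le> L" shows "u \<in> S j \<longleftrightarrow> j \<le> layer u"
proof
  assume "u \<in> S j"
  then have "{1..j} \<subseteq> {j \<in> {1..L}. u \<in> S j}"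
  proof (intro subsetI)
    fix i assume i: "i \<in> {1..j}" and uj: "u \<in> S j"
    then have "u \<in> S i" using subsetD[OF core_antimono[of i j]] by simp
    then show "i \<in> {j \<in> {1..L}. u \<in> S j}" using i j by simp
  qed
  then have "card {1..j} \<le> layer u" unfolding layer_def by (rule card_mono[rotated]) simp
  then show "j \<le> layer u" by simp
next
  assume jl: "j \<le> layer u"
  show "u \<in> S j"
  proof (rule ccontr)
    assume nu: "u \<notin> S j"
    have "j \<noteq> 0" using nu u by (cases j) auto
    have "{i \<in> {1..L}. u \<in> S i} \<subseteq> {1..j - 1}"
    proof
      fix i assume i: "i \<in> {i \<in> {1..L}. u \<in> S i}"
      have "\<not> j \<le> i" using core_antimono nu i by blast
      then show "i \<in> {1..j - 1}" using i by auto
    qed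
    then have "layer u \<le> card {1..j - 1}" unfolding layer_def by (rule card_mono[rotated]) simp
    then show False using jl \<open>j \<noteq> 0\<close> by simp
  qed
qed

definition core_deg :: "nat \<Rightarrow> nat" where "core_deg u = (if u \<in> S L then card (nbrs E u \<inter> S L) else 0)"
definition offset :: "nat \<Rightarrow> nat" where "offset u = (\<Sum>y\<in>{y\<in>V. y < u}. core_deg y)"
definition in_block :: "nat \<Rightarrow> nat \<Rightarrow> bool" where "in_block v x \<longleftrightarrow> offset v \<le> set_rank V x \<and> set_rank V x < offset v + core_deg v"
definition block_nbr :: "nat \<Rightarrow> nat \<Rightarrow> nat" where "block_nbr v x = nth_elem (nbrs E v \<inter> S L) (set_rank V x - offset v)"

lemma core_deg_le: "core_deg u \<le> card V"
proof -
  have "card (nbrs E u \<inter> S L) \<le> card V" by (rule card_mono[OF finite_V]) (use nbrs_subset[OF sg] in auto)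
  then show ?thesis unfolding core_deg_def by simp
qed

lemma offset_add_deg_le: assumes "v \<in> V" "v < v'" shows "offset v + core_deg v \<le> offset v'"
proof -
  have "{y\<in>V. y < v} \<union> {v} \<subseteq> {y\<in>V. y < v'}" using assms by auto
  then have "(\<Sum>y\<in>{y\<in>V. y < v} \<union> {v}. core_deg y) \<le> offset v'" unfolding offset_def
    by (intro sum_mono2) (auto simp: finite_V)
  moreover have "(\<Sum>y\<in>{y\<in>V. y < v} \<union> {v}. core_deg y) = offset v + core_deg v"
    unfolding offset_def using finite_V by (subst sum.union_disjoint) auto
  ultimately show ?thesis by simp
qed

lemma in_block_unique: assumes "v \<in> V" "v' \<in> V" "in_block v x" "in_block v' x" shows "v = v'"
proof (rule ccontr)
  assume ne: "v \<noteq> v'"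
  show False
  proof (cases "v < v'")
    case True
    then show False using offset_add_deg_le[OF assms(1) True] assms(3,4) unfolding in_block_def by linarith
  next
    case False
    then have "v' < v" using ne by simp
    then show False using offset_add_deg_le[OF assms(2) \<open>v' < v\<close>] assms(3,4) unfolding in_block_def by linarith
  qed
qed

lemma in_block_core: "in_block v x \<Longrightarrow> v \<in> S L" unfolding in_block_def core_deg_def by (auto split: if_splits)

lemma block_nbr_in: assumes "in_block v x" shows "block_nbr v x \<in> nbrs E v \<inter> S L"
proof -
  have "offset v \<le> set_rank V x \<and> set_rank V x < offset v + card (nbrs E v \<inter> S L)" using assms in_block_core[OF assms] unfolding in_block_def core_deg_def by simp
  then have "set_rank V x - offset v < card (nbrs E v \<inter> S L)" by linarith
  then show ?thesis unfolding block_nbr_def using nth_elem_spec finite_nbrs[OF sg] by blast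
qed

definition total_deg :: nat where "total_deg = (\<Sum>y\<in>V. core_deg y)"

lemma offset_add_deg_le_total: assumes "v \<in> V" shows "offset v + core_deg v \<le> total_deg"
proof -
  have "{y\<in>V. y < v} \<union> {v} \<subseteq> V" using assms by auto
  moreover have "v \<notin> {y\<in>V. y < v}" by simp
  ultimately have "(\<Sum>y\<in>{y\<in>V. y < v} \<union> {v}. core_deg y) \<le> total_deg" unfolding total_deg_def
    by (intro sum_mono2[OF finite_V]) auto
  moreover have "(\<Sum>y\<in>{y\<in>V. y < v} \<union> {v}. core_deg y) = offset v + core_deg v"
    unfolding offset_def using finite_V by (subst sum.union_disjoint) auto
  ultimately show ?thesis by simp
qed

lemma total_deg_eq: "total_deg = card (arcs E (S L))"
proof -
  have "total_deg = (\<Sum>y\<in>S L. core_deg y)" unfolding total_deg_def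
    by (rule sum.mono_neutral_right[OF finite_V core_subset]) (auto simp: core_deg_def)
  also have "\<dots> = (\<Sum>y\<in>S L. card (nbrs E y \<inter> S L))" by (rule sum.cong) (auto simp: core_deg_def)
  also have "\<dots> = card (arcs E (S L))" using card_arcs_eq_sum[OF sg core_subset] by simp
  finally show ?thesis .
qed

lemma card_core_peeling: "card (S j) * (T + 1) ^ j \<le> (2 * a) ^ j * card V"
proof (induction j)
  case 0 then show ?case by simp
next
  case (Suc j)
  have "card (S (Suc j)) * (T + 1) \<le> 2 * a * card (S j)"
    using card_high_degree_le[OF sg core_subset[of j] cov, where T="out_bound L a"] by simp
  then have "card (S (Suc j)) * (T + 1) * (T + 1) ^ j \<le> 2 * a * card (S j) * (T + 1) ^ j"
    by (rule mult_right_mono) simp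
  moreover have "card (S (Suc j)) * (T + 1) ^ Suc j = card (S (Suc j)) * (T + 1) * (T + 1) ^ j"
    by (simp only: power_Suc mult.assoc)
  ultimately have "card (S (Suc j)) * (T + 1) ^ Suc j \<le> 2 * a * card (S j) * (T + 1) ^ j" by simp
  also have "\<dots> \<le> 2 * a * ((2 * a) ^ j * card V)" using Suc by (simp add: mult.assoc)
  also have "\<dots> = (2 * a) ^ Suc j * card V" by simp
  finally show ?case .
qed

lemma card_core_L_small: "2 * a * card (S L) \<le> card V"
proof -
  have "2 * a * card (S L) * (T + 1) ^ L \<le> 2 * a * ((2 * a) ^ L * card V)"
    using card_core_peeling[of L] by (simp add: mult.assoc)
  also have "\<dots> = (2 * a) ^ (L + 1) * card V" by simp
  also have "\<dots> \<le> T ^ L * card V" using out_bound_pow[of a L] a1 L1 by simp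
  also have "\<dots> \<le> (T + 1) ^ L * card V" by (simp add: power_mono)
  finally have "2 * a * card (S L) * (T + 1) ^ L \<le> card V * (T + 1) ^ L" by (simp add: mult.commute)
  then show ?thesis by simp
qed

lemma total_deg_le: "total_deg \<le> card V"
  using total_deg_eq card_arcs_le[OF sg core_subset cov, of L] card_core_L_small by simp

definition arc_item :: "nat \<Rightarrow> (nat \<times> nat) option" where
  "arc_item x = (if in_block x x then Some (x, block_nbr x x)
     else if (\<exists>u. u \<in> V \<and> u \<noteq> x \<and> in_block u x)
     then Some ((SOME u. u \<in> V \<and> u \<noteq> x \<and> in_block u x), block_nbr (SOME u. u \<in> V \<and> u \<noteq> x \<and> in_block u x) x)
     else None)"

lemma arc_item_SomeD: assumes "x \<in> V" "arc_item x = Some q" shows "\<exists>v\<in>V. in_block v x \<and> q = (v, block_nbr v x)"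
proof (cases "in_block x x")
  case True then show ?thesis using assms unfolding arc_item_def by auto
next
  case False
  then have ex: "\<exists>u. u \<in> V \<and> u \<noteq> x \<and> in_block u x" using assms unfolding arc_item_def by (auto split: if_splits)
  let ?u = "SOME u. u \<in> V \<and> u \<noteq> x \<and> in_block u x"
  have u: "?u \<in> V \<and> ?u \<noteq> x \<and> in_block ?u x" using someI_ex[OF ex] .
  have "q = (?u, block_nbr ?u x)" using assms False ex unfolding arc_item_def by simp
  then show ?thesis using u by blast
qed

lemma arc_item_eq: assumes "x \<in> V" "v \<in> V" "in_block v x" shows "arc_item x = Some (v, block_nbr v x)"
proof (cases "in_block x x")
  case True
  then have "x = v" using in_block_unique assms by blast
  then show ?thesis using True unfolding arc_item_def by simp
next
  case False
  have ne: "v \<noteq> x" using False assms(3) by auto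
  then have ex: "\<exists>u. u \<in> V \<and> u \<noteq> x \<and> in_block u x" using assms by blast
  let ?u = "SOME u. u \<in> V \<and> u \<noteq> x \<and> in_block u x"
  have u: "?u \<in> V \<and> ?u \<noteq> x \<and> in_block ?u x" using someI_ex[OF ex] .
  then have "?u = v" using in_block_unique assms by blast
  then show ?thesis using False ex unfolding arc_item_def by simp
qed

lemma arc_items_eq_arcs: "{q. \<exists>x\<in>V. arc_item x = Some q} = arcs E (S L)"
proof
  show "{q. \<exists>x\<in>V. arc_item x = Some q} \<subseteq> arcs E (S L)"
  proof
    fix q assume "q \<in> {q. \<exists>x\<in>V. arc_item x = Some q}"
    then obtain x where x: "x \<in> V" "arc_item x = Some q" by blast
    then obtain v where v: "v \<in> V" "in_block v x" "q = (v, block_nbr v x)" using arc_item_SomeD by blast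
    show "q \<in> arcs E (S L)" using v in_block_core[OF v(2)] block_nbr_in[OF v(2)] unfolding arcs_def by simp
  qed
next
  show "arcs E (S L) \<subseteq> {q. \<exists>x\<in>V. arc_item x = Some q}"
  proof
    fix q assume q: "q \<in> arcs E (S L)"
    obtain v w where ow: "q = (v, w)" by (cases q)
    have v: "v \<in> S L" and w: "w \<in> nbrs E v \<inter> S L" using q ow unfolding arcs_def by auto
    have vV: "v \<in> V" using v core_subset by blast
    have fN: "finite (nbrs E v \<inter> S L)" using finite_nbrs[OF sg] by simp
    let ?i = "set_rank (nbrs E v \<inter> S L) w"
    have i: "?i < core_deg v" using set_rank_less_card[OF fN w] v unfolding core_deg_def by simp
    let ?p = "offset v + ?i"
    have p: "?p < card V" using offset_add_deg_le_total[OF vV] total_deg_le i by linarith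
    let ?x = "nth_elem V ?p"
    have x: "?x \<in> V" "set_rank V ?x = ?p" using nth_elem_spec[OF finite_V p] by auto
    have ib: "in_block v ?x" unfolding in_block_def using x i by simp
    have "block_nbr v ?x = w" unfolding block_nbr_def using x(2) nth_elem_set_rank[OF fN w] by simp
    then have "arc_item ?x = Some q" using arc_item_eq[OF x(1) vV ib] ow by simp
    then show "q \<in> {q. \<exists>x\<in>V. arc_item x = Some q}" using x(1) by blast
  qed
qed

abbreviation "Iv \<equiv> local_inp V E a"
abbreviation H :: "nat \<Rightarrow> nat \<Rightarrow> history" where "H r v \<equiv> hist (msg_alg k L) Iv V r v"

lemma length_H[simp]: "length (H r v) = r" by (rule length_hist)

lemma nth_H: "j < r \<Longrightarrow> u \<in> V \<Longrightarrow> u \<noteq> v \<Longrightarrow> (H r v ! j) u = msg_alg k L (Iv u) (H j u) v"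
  using nth_hist[of j r "msg_alg k L" Iv V v] by simp

lemma msg_alg_less: "msg_alg k L (Iv u) h x < card V ^ (2 * k + 2)"
  using card_V_ge_2 unfolding msg_alg_def by simp

lemma msg_alg_eq: "msg_raw k L (Iv u) h x < card V ^ (2 * k + 2) \<Longrightarrow> msg_alg k L (Iv u) h x = msg_raw k L (Iv u) h x"
  unfolding msg_alg_def by simp

lemma received_msg:
  assumes "j < r" "u \<in> V" "u \<noteq> v" "msg_raw k L (Iv u) (H j u) v = m" "m \<le> B * B"
  shows "(H r v ! j) u = m"
  using nth_H[OF assms(1-3)] msg_alg_eq assms(4) le_less_trans[OF assms(5) B_sq_less] by simp

lemma core_loc_eq: "j \<le> L \<Longrightarrow> j \<le> r \<Longrightarrow> v \<in> V \<Longrightarrow> core_loc L (Iv v) (H r v) j = S j"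
proof (induction j arbitrary: r v)
  case 0 then show ?case by simp
next
  case (Suc j)
  have IH: "core_loc L (Iv v) (H r v) j = S j" using Suc by simp
  have own: "u \<in> core_loc L (Iv u) (H j u) (Suc j) \<longleftrightarrow> u \<in> S (Suc j)" if "u \<in> V" for u
  proof -
    have "core_loc L (Iv u) (H j u) j = S j" using Suc.IH[of j u] Suc.prems that by simp
    then show ?thesis using that core_subset by auto
  qed
  have other: "(H r v ! j) u = (if u \<in> S (Suc j) then 1 else 0)" if "u \<in> V" "u \<noteq> v" for u
  proof (rule received_msg)
    show "msg_raw k L (Iv u) (H j u) v = (if u \<in> S (Suc j) then 1 else 0)"
      using Suc.prems own[OF that(1)] unfolding msg_raw_def by simp
    show "(if u \<in> S (Suc j) then 1 else 0) \<le> B * B" using card_V_le_BB card_V_ge_2 by simp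
  qed (use Suc.prems that in auto)
  show ?case
  proof (rule set_eqI)
    fix u
    show "u \<in> core_loc L (Iv v) (H r v) (Suc j) \<longleftrightarrow> u \<in> S (Suc j)"
    proof (cases "u = v")
      case True
      then show ?thesis using IH Suc.prems core_subset by auto
    next
      case False
      show ?thesis
      proof (cases "u \<in> V")
        case True
        then show ?thesis using other[OF True False] IH by auto
      next
        case nV: False
        then show ?thesis using core_subset[of "Suc j"] by auto
      qed
    qed
  qed
qed

lemma core_loc_L_eq: "L \<le> r \<Longrightarrow> v \<in> V \<Longrightarrow> core_loc L (Iv v) (H r v) L = S L"
  using core_loc_eq by simp

lemma own_deg_loc_eq: "L \<le> r \<Longrightarrow> v \<in> V \<Longrightarrow> own_deg_loc L (Iv v) (H r v) = core_deg v"
  unfolding own_deg_loc_def core_deg_def using core_loc_L_eq by simp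

lemma deg_loc_eq: assumes "Suc L \<le> r" "v \<in> V" "u \<in> V" shows "deg_loc L (Iv v) (H r v) u = core_deg u"
proof (cases "u = v")
  case True then show ?thesis unfolding deg_loc_def using own_deg_loc_eq assms by simp
next
  case False
  have "(H r v ! L) u = core_deg u"
  proof (rule received_msg)
    show "msg_raw k L (Iv u) (H L u) v = core_deg u" unfolding msg_raw_def using own_deg_loc_eq[of L u] assms by simp
    show "core_deg u \<le> B * B" using core_deg_le[of u] card_V_le_BB by linarith
  qed (use assms False in auto)
  then show ?thesis unfolding deg_loc_def using False by simp
qed

lemma offset_loc_eq: assumes "Suc L \<le> r" "v \<in> V" shows "offset_loc L (Iv v) (H r v) u = offset u"
  unfolding offset_loc_def offset_def using deg_loc_eq[OF assms] by (intro sum.cong) auto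

lemma in_block_loc_iff: assumes "Suc L \<le> r" "v \<in> V" shows "in_block_loc L (Iv v) (H r v) x \<longleftrightarrow> in_block v x"
  unfolding in_block_loc_def in_block_def using offset_loc_eq[OF assms] own_deg_loc_eq assms by simp

lemma block_nbr_loc_eq: assumes "Suc L \<le> r" "v \<in> V" shows "block_nbr_loc L (Iv v) (H r v) x = block_nbr v x"
  unfolding block_nbr_loc_def block_nbr_def using offset_loc_eq[OF assms] core_loc_L_eq assms by simp

lemma block_nbr_less_B: "in_block v x \<Longrightarrow> block_nbr v x < B"
  using block_nbr_in nbrs_subset[OF sg] id_less_B by blast

lemma relay_msg_eq: assumes "Suc (Suc L) \<le> r" "x \<in> V" "u \<in> V" "u \<noteq> x"
  shows "(H r x ! Suc L) u = (if in_block u x then block_nbr u x + 1 else 0)"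
proof (rule received_msg)
  show "msg_raw k L (Iv u) (H (Suc L) u) x = (if in_block u x then block_nbr u x + 1 else 0)"
    unfolding msg_raw_def using in_block_loc_iff[of "Suc L" u] block_nbr_loc_eq[of "Suc L" u] assms by simp
  show "(if in_block u x then block_nbr u x + 1 else 0) \<le> B * B"
    using block_nbr_less_B[of u x] by (auto intro: le_trans[OF Suc_leI B_le_BB])
qed (use assms in auto)

lemma arc_item_loc_eq: assumes r: "Suc (Suc L) \<le> r" and x: "x \<in> V"
  shows "arc_item_loc L (Iv x) (H r x) = arc_item x"
proof -
  have ib: "in_block_loc L (Iv x) (H r x) x \<longleftrightarrow> in_block x x" using in_block_loc_iff r x by simp
  have nb: "block_nbr_loc L (Iv x) (H r x) x = block_nbr x x" using block_nbr_loc_eq r x by simp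
  have P: "(\<lambda>u. u \<in> V \<and> u \<noteq> x \<and> (H r x ! Suc L) u \<noteq> 0) = (\<lambda>u. u \<in> V \<and> u \<noteq> x \<and> in_block u x)"
    using relay_msg_eq[OF r x] by (auto simp: fun_eq_iff split: if_splits)
  show ?thesis
  proof (cases "in_block x x")
    case True
    then show ?thesis unfolding arc_item_loc_def arc_item_def using ib nb by simp
  next
    case False
    show ?thesis
    proof (cases "\<exists>u. u \<in> V \<and> u \<noteq> x \<and> in_block u x")
      case True
      let ?u = "SOME u. u \<in> V \<and> u \<noteq> x \<and> in_block u x"
      have ex2: "\<exists>u. u \<in> V \<and> u \<noteq> x \<and> (H r x ! Suc L) u \<noteq> 0" using True P by metis
      have eqS: "(SOME u. u \<in> V \<and> u \<noteq> x \<and> (H r x ! Suc L) u \<noteq> 0) = ?u" using P by simp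
      have u: "?u \<in> V \<and> ?u \<noteq> x \<and> in_block ?u x" using someI_ex[OF True] .
      have "(H r x ! Suc L) ?u - 1 = block_nbr ?u x" using relay_msg_eq[OF r x] u by simp
      then show ?thesis unfolding arc_item_loc_def arc_item_def using False ib ex2 eqS True by simp
    next
      case nex: False
      have "\<not> (\<exists>u. u \<in> V \<and> u \<noteq> x \<and> (H r x ! Suc L) u \<noteq> 0)" using nex P by metis
      then show ?thesis unfolding arc_item_loc_def arc_item_def using False ib nex by simp
    qed
  qed
qed

abbreviation ldr :: nat where "ldr \<equiv> Min V"

lemma leader_in_V: "ldr \<in> V" using finite_V card_V_ge_2 by (intro Min_in) auto

lemma leader_local_inp[simp]: "leader (Iv u) = ldr" unfolding leader_def by simp

lemma gather_msg_iff: assumes r: "Suc (Suc (Suc L)) \<le> r" and x: "x \<in> V" "x \<noteq> ldr"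
  shows "((H r ldr ! Suc (Suc L)) x \<noteq> 0 \<and> q = decode B ((H r ldr ! Suc (Suc L)) x)) \<longleftrightarrow> arc_item x = Some q"
proof -
  have raw: "msg_raw k L (Iv x) (H (Suc (Suc L)) x) ldr = (case arc_item x of Some p \<Rightarrow> encode B p | None \<Rightarrow> 0)"
    unfolding msg_raw_def using arc_item_loc_eq[of "Suc (Suc L)" x] x by (simp split: option.split)
  show ?thesis
  proof (cases "arc_item x")
    case None
    then have "(H r ldr ! Suc (Suc L)) x = 0" using received_msg raw r x by simp
    then show ?thesis using None by simp
  next
    case (Some p)
    then obtain u where u: "u \<in> V" "in_block u x" "p = (u, block_nbr u x)" using arc_item_SomeD[OF x(1)] by blast
    then have uB: "u < B" and wB: "block_nbr u x < B" using id_less_B block_nbr_less_B by auto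
    have "(H r ldr ! Suc (Suc L)) x = encode B p"
      using received_msg[OF _ x(1,2)] raw Some u(3) encode_le[OF uB wB] r by simp
    moreover have "encode B p \<noteq> 0" unfolding encode_def by simp
    ultimately show ?thesis using Some u(3) decode_encode[OF wB] by auto
  qed
qed

lemma gathered_item_iff:
  assumes r: "Suc (Suc (Suc L)) \<le> r" and x: "x \<in> V"
  shows "(x \<noteq> ldr \<and> (H r ldr ! Suc (Suc L)) x \<noteq> 0 \<and> q = decode B ((H r ldr ! Suc (Suc L)) x)) \<or>
      (x = ldr \<and> arc_item_loc L (Iv ldr) (H r ldr) = Some q) \<longleftrightarrow> arc_item x = Some q"
proof (cases "x = ldr")
  case True
  then show ?thesis using arc_item_loc_eq[of r ldr] r leader_in_V by simp
next
  case False
  then show ?thesis using gather_msg_iff[OF r x False] by simp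
qed

lemma gathered_arcs_eq:
  "Suc (Suc (Suc L)) \<le> r \<Longrightarrow> gathered_arcs k L (Iv ldr) (H r ldr) = arcs E (S L)"
  unfolding gathered_arcs_def arc_items_eq_arcs[symmetric] using gathered_item_iff by simp

definition core_rank :: "nat \<Rightarrow> nat" where "core_rank = some_degeneracy_rank a (S L) (arcs E (S L))"
definition rank :: "nat \<Rightarrow> nat" where "rank u = (if u \<in> S L then core_rank u else 0)"

lemma degeneracy_rank_core_rank: "degeneracy_rank a (S L) (arcs E (S L)) core_rank"
  unfolding core_rank_def using some_degeneracy_rank[OF sg core_subset cov] .

lemma rank_less_card: "rank u < card V"
proof (cases "u \<in> S L")
  case True
  then have "core_rank u < card (S L)" using degeneracy_rank_core_rank unfolding degeneracy_rank_def by blast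
  moreover have "card (S L) \<le> card V" using card_mono[OF finite_V core_subset] .
  ultimately show ?thesis unfolding rank_def using True by simp
next
  case False then show ?thesis unfolding rank_def using card_V_ge_2 by simp
qed

lemma leader_rank_eq: "Suc (Suc (Suc L)) \<le> r \<Longrightarrow> leader_rank k L (Iv ldr) (H r ldr) = core_rank"
  unfolding leader_rank_def core_rank_def using gathered_arcs_eq core_loc_L_eq[of r ldr] leader_in_V by simp

lemma own_rank_loc_eq: assumes r: "L + 4 \<le> r" and u: "u \<in> V" shows "own_rank_loc k L (Iv u) (H r u) = rank u"
proof (cases "u = ldr")
  case True
  then show ?thesis unfolding own_rank_loc_def rank_def using leader_rank_eq[of r] core_loc_L_eq[of r u] r u by simp
next
  case False
  have "(H r u ! (L + 3)) ldr = rank u"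
  proof (rule received_msg)
    show "msg_raw k L (Iv ldr) (H (L + 3) ldr) u = rank u"
      unfolding msg_raw_def rank_def using leader_rank_eq[of "L + 3"] core_loc_L_eq[of "L + 3" ldr] leader_in_V by simp
    show "rank u \<le> B * B" using rank_less_card[of u] card_V_le_BB by linarith
  qed (use r False leader_in_V in auto)
  then show ?thesis unfolding own_rank_loc_def using False by simp
qed

lemma rank_loc_eq: assumes r: "L + 5 \<le> r" and v: "v \<in> V" and u: "u \<in> V" shows "rank_loc k L (Iv v) (H r v) u = rank u"
proof (cases "u = v")
  case True
  then show ?thesis unfolding rank_loc_def using own_rank_loc_eq[of r v] r v by simp
next
  case False
  have "(H r v ! (L + 4)) u = rank u"
  proof (rule received_msg)
    show "msg_raw k L (Iv u) (H (L + 4) u) v = rank u" unfolding msg_raw_def using own_rank_loc_eq[of "L + 4" u] u by simp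
    show "rank u \<le> B * B" using rank_less_card[of u] card_V_le_BB by linarith
  qed (use r u False in auto)
  then show ?thesis unfolding rank_loc_def using False by simp
qed

lemma layer_loc_eq: assumes "L \<le> r" "v \<in> V" shows "layer_loc L (Iv v) (H r v) u = layer u"
proof -
  have "{j \<in> {1..L}. u \<in> core_loc L (Iv v) (H r v) j} = {j \<in> {1..L}. u \<in> S j}" using core_loc_eq assms by auto
  then show ?thesis unfolding layer_loc_def layer_def by simp
qed

definition key :: "nat \<Rightarrow> nat" where "key u = (layer u * B + rank u) * B + u"

lemma key_loc_eq: assumes "L + 5 \<le> r" "v \<in> V" "u \<in> V" shows "key_loc k L (Iv v) (H r v) u = key u"
  unfolding key_loc_def key_def using layer_loc_eq[of r v u] rank_loc_eq[OF assms] assms by simp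

definition out_nbrs :: "nat \<Rightarrow> nat set" where "out_nbrs v = {w \<in> nbrs E v. key v < key w}"

lemma out_nbrs_loc_eq: assumes "L + 5 \<le> r" "v \<in> V" shows "out_nbrs_loc k L (Iv v) (H r v) = out_nbrs v"
proof -
  have "\<forall>x\<in>nbrs E v. key_loc k L (Iv v) (H r v) x = key x" using key_loc_eq[OF assms] nbrs_subset[OF sg] by blast
  moreover have "key_loc k L (Iv v) (H r v) v = key v" using key_loc_eq[OF assms assms(2)] .
  ultimately show ?thesis unfolding out_nbrs_loc_def out_nbrs_def by auto
qed

lemma rank_less_B: "rank u < B" using rank_less_card card_V_le_B by (rule less_le_trans)

lemma key_less_cases: assumes "u \<in> V" "w \<in> V" "key u < key w"
  shows "layer u < layer w \<or> (layer u = layer w \<and> rank u \<le> rank w)"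
proof -
  have B0: "0 < B" using card_V_le_B card_V_ge_2 by linarith
  have "layer u * B + rank u < layer w * B + rank w \<or> (layer u * B + rank u = layer w * B + rank w \<and> u < w)"
    using add_mult_less_cases[OF id_less_B[OF assms(1)] id_less_B[OF assms(2)]] assms(3) unfolding key_def by blast
  then show ?thesis
  proof
    assume "layer u * B + rank u < layer w * B + rank w"
    then show ?thesis using add_mult_less_cases[OF rank_less_B rank_less_B] by fastforce
  next
    assume h: "layer u * B + rank u = layer w * B + rank w \<and> u < w"
    then have e: "rank u = rank w" using add_mult_eq_cancel[OF rank_less_B rank_less_B] by blast
    then have "layer u * B = layer w * B" using h by simp
    then have "layer u = layer w" using B0 by (metis mult_right_cancel less_not_refl)
    then show ?thesis using e by simp
  qed
qed

lemma key_inj: assumes "u \<in> V" "w \<in> V" "key u = key w" shows "u = w"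
  using add_mult_eq_cancel[OF id_less_B[OF assms(1)] id_less_B[OF assms(2)]] assms(3) unfolding key_def by blast

lemma out_nbrs_subset: "out_nbrs v \<subseteq> nbrs E v" unfolding out_nbrs_def by auto

lemma finite_out_nbrs: "finite (out_nbrs v)" using finite_nbrs[OF sg] out_nbrs_subset by (rule finite_subset[rotated])

lemma out_nbrs_below_L:
  assumes x: "x \<in> V" and lx: "layer x < L"
  shows "out_nbrs x \<subseteq> nbrs E x \<inter> S (layer x)"
proof
  fix w assume "w \<in> out_nbrs x"
  then have wN: "w \<in> nbrs E x" and lt: "key x < key w" unfolding out_nbrs_def by auto
  have wV: "w \<in> V" using wN nbrs_subset[OF sg] by blast
  have "layer x \<le> layer w" using key_less_cases[OF x wV lt] by auto
  then show "w \<in> nbrs E x \<inter> S (layer x)" using in_core_iff_layer[OF wV] lx wN by simp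
qed

lemma out_nbrs_in_final_core:
  assumes x: "x \<in> V" and lx: "layer x = L"
  shows "out_nbrs x \<subseteq> {w\<in>S L. (x, w) \<in> arcs E (S L) \<and> core_rank x < core_rank w}"
proof
  fix w assume "w \<in> out_nbrs x"
  then have wN: "w \<in> nbrs E x" and lt: "key x < key w" unfolding out_nbrs_def by auto
  have wV: "w \<in> V" using wN nbrs_subset[OF sg] by blast
  have xL: "x \<in> S L" using in_core_iff_layer[OF x] lx by simp
  have h: "layer x < layer w \<or> (layer x = layer w \<and> rank x \<le> rank w)" using key_less_cases[OF x wV lt] .
  then have "layer w = L" using lx layer_le[of w] by auto
  then have wL: "w \<in> S L" using in_core_iff_layer[OF wV] by simp
  have "core_rank x \<le> core_rank w" using h lx xL wL \<open>layer w = L\<close> unfolding rank_def by simp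
  moreover have "core_rank x \<noteq> core_rank w"
    using degeneracy_rank_core_rank xL wL wN not_in_nbrs_self[OF sg]
    unfolding degeneracy_rank_def inj_on_def by metis
  ultimately show "w \<in> {w\<in>S L. (x, w) \<in> arcs E (S L) \<and> core_rank x < core_rank w}"
    using wL xL wN unfolding arcs_def by simp
qed

lemma card_out_nbrs_le: assumes x: "x \<in> V" shows "card (out_nbrs x) \<le> T"
proof (cases "layer x < L")
  case True
  have "x \<in> S (layer x)" "x \<notin> S (Suc (layer x))"
    using in_core_iff_layer[OF x] in_core_iff_layer[OF x, of "Suc (layer x)"] True by simp_all
  then have "card (nbrs E x \<inter> S (layer x)) \<le> T" by simp
  moreover have "card (out_nbrs x) \<le> card (nbrs E x \<inter> S (layer x))"
    using out_nbrs_below_L[OF x True] finite_nbrs[OF sg] by (intro card_mono) auto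
  ultimately show ?thesis by simp
next
  case False
  then have lx: "layer x = L" using layer_le[of x] by simp
  have "card {w\<in>S L. (x, w) \<in> arcs E (S L) \<and> core_rank x < core_rank w} \<le> 2 * a"
    using degeneracy_rank_core_rank in_core_iff_layer[OF x] lx unfolding degeneracy_rank_def by simp
  moreover have "card (out_nbrs x) \<le> card {w\<in>S L. (x, w) \<in> arcs E (S L) \<and> core_rank x < core_rank w}"
    using out_nbrs_in_final_core[OF x lx] simple_graph_finite[OF sg core_subset[of L]] by (intro card_mono) auto
  ultimately show ?thesis using out_bound_ge_2a[of a L] a1 by simp
qed

definition label :: "nat \<Rightarrow> nat \<Rightarrow> nat" where
  "label v u = (if key v < key u then set_rank (out_nbrs v) u + 1 else set_rank (out_nbrs u) v + 1)"

definition parent :: "nat \<Rightarrow> nat \<Rightarrow> bool" where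
  "parent v u \<longleftrightarrow> key v < key u"

lemma out_alg_eq: assumes v: "v \<in> V" and u: "u \<in> nbrs E v"
  shows "out_alg k L (Iv v) (H (L + 6) v) u = (label v u, parent v u)"
proof -
  have uV: "u \<in> V" using u nbrs_subset[OF sg] by blast
  have uv: "u \<noteq> v" using u not_in_nbrs_self[OF sg] by blast
  have kv: "key_loc k L (Iv v) (H (L + 6) v) v = key v" and ku: "key_loc k L (Iv v) (H (L + 6) v) u = key u"
    using key_loc_eq[of "L + 6" v] v uV by auto
  have outs: "out_nbrs_loc k L (Iv v) (H (L + 6) v) = out_nbrs v" using out_nbrs_loc_eq[of "L + 6" v] v by simp
  show ?thesis
  proof (cases "key v < key u")
    case True
    then show ?thesis unfolding out_alg_def label_def parent_def using kv ku outs by simp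
  next
    case False
    then have "key u < key v" using key_inj[OF uV v] uv nat_neq_iff by blast
    then have vo: "v \<in> out_nbrs u" unfolding out_nbrs_def using u nbrs_sym by auto
    have "(H (L + 6) v ! (L + 5)) u = set_rank (out_nbrs u) v + 1"
    proof (rule received_msg)
      show "msg_raw k L (Iv u) (H (L + 5) u) v = set_rank (out_nbrs u) v + 1"
        unfolding msg_raw_def using out_nbrs_loc_eq[of "L + 5" u] uV vo by simp
      have "set_rank (out_nbrs u) v < card (out_nbrs u)" using set_rank_less_card[OF finite_out_nbrs vo] .
      moreover have "card (out_nbrs u) \<le> card V"
        using out_nbrs_subset nbrs_subset[OF sg] by (intro card_mono[OF finite_V]) blast
      ultimately show "set_rank (out_nbrs u) v + 1 \<le> B * B" using card_V_le_BB by linarith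
    qed (use uV uv in auto)
    then show ?thesis unfolding out_alg_def label_def parent_def using kv ku False by simp
  qed
qed

lemma edgeD: assumes "{x, y} \<in> E" shows "x \<in> V" "y \<in> V" "y \<in> nbrs E x" "x \<in> nbrs E y" "x \<noteq> y"
proof -
  show yx: "y \<in> nbrs E x" using assms unfolding nbrs_def by simp
  then show xy: "x \<in> nbrs E y" using nbrs_sym by blast
  show "x \<in> V" using xy nbrs_subset[OF sg] by blast
  show "y \<in> V" using yx nbrs_subset[OF sg] by blast
  show "x \<noteq> y" using yx not_in_nbrs_self[OF sg] by blast
qed

lemma label_sym: assumes "x \<in> V" "y \<in> V" "x \<noteq> y" shows "label x y = label y x"
proof -
  have "key x \<noteq> key y" using key_inj assms by blast
  then show ?thesis unfolding label_def by auto
qed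

lemma out_nbrs_iff: "x \<in> V \<Longrightarrow> y \<in> nbrs E x \<Longrightarrow> y \<in> out_nbrs x \<longleftrightarrow> key x < key y"
  unfolding out_nbrs_def by simp

lemma label_out_nbrs_inj:
  assumes "y \<in> out_nbrs x" "z \<in> out_nbrs x" "label x y = label x z"
  shows "y = z"
proof -
  have "set_rank (out_nbrs x) y = set_rank (out_nbrs x) z"
    using assms unfolding label_def out_nbrs_def by simp
  then show ?thesis using inj_on_set_rank[OF finite_out_nbrs] assms(1,2) unfolding inj_on_def by blast
qed

lemma label_range: assumes e: "{u, v} \<in> E" shows "label u v \<in> {1..T}"
proof -
  have bound: "set_rank (out_nbrs x) y + 1 \<in> {1..T}" if "x \<in> V" "y \<in> out_nbrs x" for x y
    using set_rank_less_card[OF finite_out_nbrs that(2)] card_out_nbrs_le[OF that(1)] by simp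
  have "key u \<noteq> key v" using key_inj edgeD[OF e] by blast
  then consider "key u < key v" | "key v < key u" by linarith
  then show ?thesis
  proof cases
    case 1
    then show ?thesis using bound out_nbrs_iff edgeD[OF e] unfolding label_def by simp
  next
    case 2
    then show ?thesis using bound out_nbrs_iff edgeD[OF e] unfolding label_def by simp
  qed
qed

lemma label_class_acyclic:
  assumes c: "is_cycle C vs" and C: "\<And>x y. {x, y} \<in> C \<Longrightarrow> {x, y} \<in> E \<and> label x y = i"
  shows False
proof -
  have inV: "w \<in> V" if w: "w \<in> set vs" for w
  proof -
    obtain y where "{w, y} \<in> C" using is_cycle_two_nbrs[OF c w] by blast
    then show ?thesis using C edgeD(1) by blast
  qed
  have "vs \<noteq> []" using c unfolding is_cycle_def by auto
  then have "Min (key ` set vs) \<in> key ` set vs" by (intro Min_in) auto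
  then obtain x where x: "x \<in> set vs" "key x = Min (key ` set vs)" by auto
  obtain y z where yz: "y \<in> set vs" "z \<in> set vs" "y \<noteq> x" "z \<noteq> x" "y \<noteq> z" "{x, y} \<in> C" "{z, x} \<in> C"
    using is_cycle_two_nbrs[OF c x(1)] by blast
  have key_less: "key x < key w" if "w \<in> set vs" "w \<noteq> x" for w
  proof -
    have "key x \<le> key w" using x(2) that(1) by simp
    moreover have "key x \<noteq> key w" using key_inj[OF inV[OF x(1)] inV[OF that(1)]] that(2) by blast
    ultimately show ?thesis by simp
  qed
  have xy: "{x, y} \<in> E" "label x y = i" using C[OF yz(6)] by auto
  have zx: "{z, x} \<in> E" "label z x = i" using C[OF yz(7)] by auto
  have "y \<in> out_nbrs x" using out_nbrs_iff[OF inV[OF x(1)] edgeD(3)[OF xy(1)]] key_less yz(1,3) by blast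
  moreover have "z \<in> out_nbrs x" using out_nbrs_iff[OF inV[OF x(1)] edgeD(4)[OF zx(1)]] key_less yz(2,4) by blast
  moreover have "label x z = i" using zx label_sym[OF inV[OF yz(2)] inV[OF x(1)] yz(4)] by simp
  ultimately have "y = z" using label_out_nbrs_inj xy(2) by simp
  then show False using yz(5) by simp
qed

abbreviation out_label :: "nat \<Rightarrow> nat \<Rightarrow> nat" where
  "out_label v u \<equiv> fst (out_alg k L (Iv v) (H (L + 6) v) u)"

abbreviation out_parent :: "nat \<Rightarrow> nat \<Rightarrow> bool" where
  "out_parent v u \<equiv> snd (out_alg k L (Iv v) (H (L + 6) v) u)"

lemma out_label_parent: "{x, y} \<in> E \<Longrightarrow> out_label x y = label x y \<and> out_parent x y = parent x y"
  using out_alg_eq edgeD(1,3) by simp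

lemma forest_decomposition_alg: "forest_decomposition_output V E out_label out_parent (real T)"
  unfolding forest_decomposition_output_def
proof (intro conjI allI impI ballI)
  fix u v assume e: "{u, v} \<in> E"
  then have e': "{v, u} \<in> E" by (simp add: insert_commute)
  show "out_label u v = out_label v u"
    using out_label_parent[OF e] out_label_parent[OF e'] label_sym edgeD[OF e] by simp
  have "key u \<noteq> key v" using key_inj edgeD[OF e] by blast
  then show "out_parent u v = (\<not> out_parent v u)"
    using out_label_parent[OF e] out_label_parent[OF e'] unfolding parent_def by auto
next
  fix i
  let ?C = "{e \<in> E. \<exists>u v. e = {u, v} \<and> out_label u v = i}"
  have "{x, y} \<in> E \<and> label x y = i" if "{x, y} \<in> ?C" for x y
  proof -
    have xy: "{x, y} \<in> E" "\<exists>u v. {x, y} = {u, v} \<and> out_label u v = i" using that by simp_all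
    then obtain u v where "{x, y} = {u, v}" "out_label u v = i" by blast
    then have uv: "{x, y} = {u, v}" "{u, v} \<in> E" "out_label u v = i" using xy(1) by simp_all
    then have "label u v = i" using out_label_parent by auto
    moreover have "label v u = label u v" using label_sym edgeD[OF uv(2)] by simp
    ultimately show ?thesis using uv(1) xy(1) by (auto simp: doubleton_eq_iff)
  qed
  then show "forest ?C" unfolding forest_def using label_class_acyclic by blast
next
  fix v i u w assume v: "v \<in> V"
    and h: "{v, u} \<in> E \<and> out_label v u = i \<and> out_parent v u \<and> {v, w} \<in> E \<and> out_label v w = i \<and> out_parent v w"
  then have eu: "{v, u} \<in> E" and ew: "{v, w} \<in> E" by auto
  have "u \<in> out_nbrs v" using h out_label_parent[OF eu] out_nbrs_iff[OF v edgeD(3)[OF eu]]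
    unfolding parent_def by simp
  moreover have "w \<in> out_nbrs v" using h out_label_parent[OF ew] out_nbrs_iff[OF v edgeD(3)[OF ew]]
    unfolding parent_def by simp
  moreover have "label v u = label v w" using h out_label_parent[OF eu] out_label_parent[OF ew] by simp
  ultimately show "u = w" by (rule label_out_nbrs_inj)
next
  have "{out_label u v | u v. {u, v} \<in> E} \<subseteq> {1..T}"
    using out_label_parent label_range by auto
  then have "card {out_label u v | u v. {u, v} \<in> E} \<le> card {1..T}" by (intro card_mono) simp_all
  then show "real (card {out_label u v | u v. {u, v} \<in> E}) \<le> real T" by simp
qed

lemma msgs_bounded_alg: "msgs_bounded (msg_alg k L) V E a R (2 * k + 2)"
  unfolding msgs_bounded_def using msg_alg_less by blast

end

lemma forest_decomposition_output_mono:
  "forest_decomposition_output V E lab par b \<Longrightarrow> b \<le> b' \<Longrightarrow> forest_decomposition_output V E lab par b'"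
  unfolding forest_decomposition_output_def by auto

lemma forest_alg_correct:
  assumes "simple_graph V E" "V \<subseteq> {..<card V ^ k}" "arboricity E = a" "a \<ge> 2" "L \<ge> 1"
  shows "msgs_bounded (msg_alg k L) V E a (L + 6) (2 * k + 2) \<and>
    forest_decomposition_output V E
      (\<lambda>v u. fst (out_alg k L (local_inp V E a v) (hist (msg_alg k L) (local_inp V E a) V (L + 6) v) u))
      (\<lambda>v u. snd (out_alg k L (local_inp V E a v) (hist (msg_alg k L) (local_inp V E a) V (L + 6) v) u))
      (real (out_bound L a))"
proof -
  interpret forest_alg V E a L k
    using assms covered_by_forests_arboricity card_ge_2_if_arboricity_pos by unfold_locales auto
  show ?thesis using msgs_bounded_alg forest_decomposition_alg by simp
qed

theorem mainTheorem9:
  fixes \<epsilon> :: real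
  assumes "\<epsilon> > 0"
  shows "\<forall>k::nat. \<exists>(msg :: msg_fun) (out :: out_fun) (C :: real) (R :: nat) (c :: nat).
     \<forall>V E a. simple_graph V E \<and> V \<subseteq> {..< card V ^ k} \<and> arboricity E = a \<and> a \<ge> 2 \<longrightarrow>
       msgs_bounded msg V E a R c \<and>
       forest_decomposition_output V E
         (\<lambda>v u. fst (out (local_inp V E a v) (hist msg (local_inp V E a) V R v) u))
         (\<lambda>v u. snd (out (local_inp V E a v) (hist msg (local_inp V E a) V R v) u))
         (C * real a powr (1 + \<epsilon>))"
proof -
  define L where "L = nat \<lceil>1 / \<epsilon>\<rceil>"
  have L: "1 / \<epsilon> \<le> real L" "L \<ge> 1"
    using assms unfolding L_def by (linarith, simp add: Suc_le_eq)
  have bound: "real (out_bound L a) \<le> (2 powr (1 + \<epsilon>) + 1) * real a powr (1 + \<epsilon>)" if "a \<ge> 2" for a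
    using out_bound_le[OF assms _ L(1)] that by simp
  show ?thesis
    using forest_alg_correct[OF _ _ _ _ L(2)] forest_decomposition_output_mono bound by blast
qed

end
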